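(* Let $H\subseteq F^7$ be the binary Hamming code of length 7 spanned by the vectors with supports $\{1,2,3\},\{1,4,5\},\{1,6,7\},\{2,4,6\}$. Let $\lambda_1:H\to\{0,1\}$ take the value $0$ exactly on $0^7$, $\{1,6,7\}$, $\{1,3,5,7\}$, $1^7$ (codewords given by supports) and $1$ on the other codewords, and let $\lambda_2:H\to\{0,1\}$ take the value $0$ exactly on $0^7$, $\{1,6,7\}$, $\{2,4,6\}$, $\{4,5,6,7\}$ and $1$ on the other codewords. Then the perfect codes $V22^1=V_H^{\lambda_1}$ and $V3^11=V_H^{\lambda_2}$ of length 15 are homogeneous, where $V_H^\lambda=\{(x+y,\ |x|+\lambda(y),\ x)\mid x\in F^7,\ y\in H\}$.
   Context: $|x|=x_1+\dots+x_7\pmod 2$. For a binary perfect code $C$ of length $m$ and a codeword $y\in C$, $STS(C,y)=\{\mathrm{supp}(x+y)\mid x\in C,\ d(x,y)=3\}$ (a Steiner triple system on $\{1,\dots,m\}$), where $d$ is Hamming distance. A perfect code $C$ containing $0^m$ is homogeneous if for every $y\in C$ there is a permutation $\pi\in S_m$ with $\pi(STS(C,y))=STS(C,0^m)$. *)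

theory Defs
  imports "HOL-Combinatorics.Permutations"
begin

text \<open>Binary vectors of length m are represented by their supports,
  i.e. subsets of {1..m}; vector addition over GF(2) is symmetric difference.\<close>

definition vecs :: "nat \<Rightarrow> nat set set" where
  "vecs m = Pow {1..m}"

definition vadd :: "nat set \<Rightarrow> nat set \<Rightarrow> nat set" where
  "vadd x y = (x - y) \<union> (y - x)"

definition hdist :: "nat set \<Rightarrow> nat set \<Rightarrow> nat" where
  "hdist x y = card (vadd x y)"

definition perfect_code :: "nat \<Rightarrow> nat set set \<Rightarrow> bool" where
  "perfect_code m C \<longleftrightarrow> C \<subseteq> vecs m \<and>
     (\<forall>v \<in> vecs m. \<exists>!c. c \<in> C \<and> hdist v c \<le> 1)"

definition STS :: "nat set set \<Rightarrow> nat set \<Rightarrow> nat set set" where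
  "STS C y = {vadd x y | x. x \<in> C \<and> hdist x y = 3}"

definition homogeneous :: "nat \<Rightarrow> nat set set \<Rightarrow> bool" where
  "homogeneous m C \<longleftrightarrow> perfect_code m C \<and> {} \<in> C \<and>
     (\<forall>y \<in> C. \<exists>\<pi>. \<pi> permutes {1..m} \<and> (\<lambda>T. \<pi> ` T) ` STS C y = STS C {})"

inductive_set span2 :: "nat set set \<Rightarrow> nat set set" for G where
  zero: "{} \<in> span2 G"
| add: "g \<in> G \<Longrightarrow> x \<in> span2 G \<Longrightarrow> vadd g x \<in> span2 G"

definition hamH :: "nat set set" where
  "hamH = span2 {{1,2,3}, {1,4,5}, {1,6,7}, {2,4,6}}"

definition lambda1 :: "nat set \<Rightarrow> nat" where
  "lambda1 y = (if y \<in> {{}, {1,6,7}, {1,3,5,7}, {1..7}} then 0 else 1)"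

definition lambda2 :: "nat set \<Rightarrow> nat" where
  "lambda2 y = (if y \<in> {{}, {1,6,7}, {2,4,6}, {4,5,6,7}} then 0 else 1)"

text \<open>Vasil'ev construction V_H^lambda = {(x+y, |x|+lambda(y), x)}: coordinates
  1..7 carry x+y, coordinate 8 the parity bit, coordinates 9..15 carry x.\<close>
definition vasiliev :: "(nat set \<Rightarrow> nat) \<Rightarrow> nat set set" where
  "vasiliev lam = {vadd x y \<union> (if odd (card x + lam y) then {8} else {}) \<union> (\<lambda>i. i + 8) ` x
                   | x y. x \<in> vecs 7 \<and> y \<in> hamH}"

end

theory Submission
  imports Defs
begin

text \<open>The Vasil'ev code \<open>V = V\<^sub>H\<^sup>\<lambda>\<close> has \<open>2\<^sup>1\<^sup>1\<close> words of length 15 at mutual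
  distance at least 3, so the balls of radius 1 around them fill \<open>F\<^sup>1\<^sup>5\<close> and \<open>V\<close> is perfect.
  When \<open>\<lambda>(0) = 0\<close> the codewords \<open>(u, |u|, u)\<close> translate \<open>V\<close> onto itself, so the Steiner triple
  system at \<open>(x + y, |x| + \<lambda>(y), x)\<close> depends only on \<open>y \<in> H\<close>, leaving 16 systems to compare.
  For each of them an explicit permutation of the coordinates maps the 35 triples of \<open>STS(V, 0)\<close>
  into it; since two points of a Steiner triple system lie in exactly one triple, the inclusion
  is an equality.\<close>

section \<open>Binary vectors\<close>

lemma vadd_iff [simp]: "i \<in> vadd a b \<longleftrightarrow> (i \<in> a) \<noteq> (i \<in> b)"
  by (auto simp: vadd_def)

lemma vadd_commute: "vadd a b = vadd b a"
  by auto

lemma vadd_assoc: "vadd (vadd a b) c = vadd a (vadd b c)"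
  by auto

lemma vadd_self [simp]: "vadd a a = {}"
  by auto

lemma vadd_empty [simp]: "vadd a {} = a" "vadd {} a = a"
  by auto

lemma vadd_cancel [simp]: "vadd a (vadd a b) = b" "vadd (vadd b a) a = b"
  by auto

lemma vadd_eq_empty_iff: "vadd a b = {} \<longleftrightarrow> a = b"
  by (auto simp: set_eq_iff)

lemma vadd_subset: "a \<subseteq> S \<Longrightarrow> b \<subseteq> S \<Longrightarrow> vadd a b \<subseteq> S"
  by auto

lemma finite_vadd [simp]: "finite a \<Longrightarrow> finite b \<Longrightarrow> finite (vadd a b)"
  by (simp add: vadd_def)

lemma card_vadd_le: "finite a \<Longrightarrow> finite b \<Longrightarrow> card (vadd a b) \<le> card a + card b"
  by (rule order_trans[OF card_mono card_Un_le]) auto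

lemma card_vadd_triangle:
  "finite a \<Longrightarrow> finite b \<Longrightarrow> finite c \<Longrightarrow> card (vadd a c) \<le> card (vadd a b) + card (vadd b c)"
  using card_vadd_le[of "vadd a b" "vadd b c"] by (simp add: vadd_assoc)

lemma card_vadd_parity:
  assumes "finite a" "finite b"
  shows "card a + card b = card (vadd a b) + 2 * card (a \<inter> b)"
proof -
  have "a \<union> b = vadd a b \<union> (a \<inter> b)" "vadd a b \<inter> (a \<inter> b) = {}"
    by auto
  then have "card (a \<union> b) = card (vadd a b) + card (a \<inter> b)"
    using assms by (simp add: card_Un_disjoint)
  then show ?thesis
    using card_Un_Int[OF assms] by simp
qed

section \<open>Perfect codes and their Steiner triple systems\<close>

lemma radius_one_balls_cover:
  assumes C: "C \<subseteq> vecs m"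
    and dist: "\<And>a b. a \<in> C \<Longrightarrow> b \<in> C \<Longrightarrow> a \<noteq> b \<Longrightarrow> 3 \<le> hdist a b"
    and card_C: "card C * (m + 1) = 2 ^ m"
    and v: "v \<in> vecs m"
  shows "\<exists>c \<in> C. hdist v c \<le> 1"
proof -
  define E where "E = insert {} ((\<lambda>i. {i}) ` {1..m})"
  have E: "e \<subseteq> {1..m}" "finite e" "card e \<le> 1" if "e \<in> E" for e
    using that by (auto simp: E_def)
  have card_E: "card E = m + 1"
    unfolding E_def by (subst card_insert_disjoint) (auto simp: card_image)
  let ?ball = "\<lambda>(c, e). vadd c e"
  have "inj_on ?ball (C \<times> E)"
  proof (rule inj_onI, clarify)
    fix c e c' e' assume "c \<in> C" "e \<in> E" "c' \<in> C" "e' \<in> E" and eq: "vadd c e = vadd c' e'"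
    have "hdist c c' = card (vadd e e')"
      by (metis eq hdist_def vadd_assoc vadd_cancel(1) vadd_commute)
    also have "\<dots> \<le> 2"
      using card_vadd_le[of e e'] E[OF \<open>e \<in> E\<close>] E[OF \<open>e' \<in> E\<close>] by linarith
    finally have "c = c'"
      using dist \<open>c \<in> C\<close> \<open>c' \<in> C\<close> by fastforce
    then show "c = c' \<and> e = e'"
      using eq by (metis vadd_cancel(1))
  qed
  then have "card (?ball ` (C \<times> E)) = 2 ^ m"
    using card_C card_E by (simp add: card_image card_cartesian_product)
  moreover have "?ball ` (C \<times> E) \<subseteq> vecs m"
    using C E(1) vadd_subset unfolding vecs_def by blast
  ultimately have cover: "?ball ` (C \<times> E) = vecs m"
    by (intro card_subset_eq) (auto simp: vecs_def card_Pow)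
  from v obtain c e where "c \<in> C" "e \<in> E" "v = vadd c e"
    unfolding cover[symmetric] by auto
  then have "hdist v c \<le> 1"
    using E by (simp add: hdist_def vadd_commute)
  with \<open>c \<in> C\<close> show ?thesis
    by blast
qed

lemma perfect_code_if_sphere_packing_tight:
  assumes C: "C \<subseteq> vecs m"
    and dist: "\<And>a b. a \<in> C \<Longrightarrow> b \<in> C \<Longrightarrow> a \<noteq> b \<Longrightarrow> 3 \<le> hdist a b"
    and card_C: "card C * (m + 1) = 2 ^ m"
  shows "perfect_code m C"
  unfolding perfect_code_def
proof (intro conjI ballI C)
  fix v assume v: "v \<in> vecs m"
  then obtain c where c: "c \<in> C" "hdist v c \<le> 1"
    using radius_one_balls_cover[OF assms] by blast
  have finite: "finite u" if "u \<in> vecs m" for u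
    using that by (auto simp: vecs_def intro: finite_subset)
  have "c' = c" if c': "c' \<in> C" "hdist v c' \<le> 1" for c'
  proof -
    have "hdist c c' \<le> hdist c v + hdist v c'"
      using card_vadd_triangle[of c v c'] finite C c(1) c'(1) v by (auto simp: hdist_def)
    also have "\<dots> \<le> 2"
      using c(2) c'(2) by (simp add: hdist_def vadd_commute)
    finally show ?thesis
      using dist c(1) c'(1) by fastforce
  qed
  with c show "\<exists>!c. c \<in> C \<and> hdist v c \<le> 1"
    by blast
qed

lemma mem_STS_iff: "T \<in> STS C c \<longleftrightarrow> vadd T c \<in> C \<and> card T = 3"
  unfolding STS_def hdist_def by (auto intro!: exI[of _ "vadd T c"])

lemma STS_translate:
  assumes "\<And>w. w \<in> C \<Longrightarrow> vadd w k \<in> C"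
  shows "STS C (vadd c k) = STS C c"
proof -
  have "vadd T (vadd c k) \<in> C \<longleftrightarrow> vadd T c \<in> C" for T
    using assms[of "vadd T c"] assms[of "vadd T (vadd c k)"] by (auto simp: vadd_assoc)
  then show ?thesis
    by (auto simp: mem_STS_iff)
qed

lemma STS_subset:
  assumes "perfect_code m C" "c \<in> C" "T \<in> STS C c"
  shows "T \<subseteq> {1..m}"
proof -
  have "vadd T c \<subseteq> {1..m}" "c \<subseteq> {1..m}"
    using assms by (auto simp: perfect_code_def vecs_def mem_STS_iff)
  then show ?thesis
    using vadd_subset[of "vadd T c" "{1..m}" c] by simp
qed

text \<open>The word \<open>c + {i, j}\<close> lies within distance 1 of both codewords \<open>c + T\<close> and \<open>c + T'\<close>.\<close>

lemma STS_pair_unique: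
  assumes C: "perfect_code m C" "c \<in> C" and T: "T \<in> STS C c" "T' \<in> STS C c"
    and ij: "i \<noteq> j" "{i, j} \<subseteq> T" "{i, j} \<subseteq> T'"
  shows "T = T'"
proof -
  have close: "hdist (vadd {i, j} c) (vadd X c) \<le> 1" if "X \<in> STS C c" "{i, j} \<subseteq> X" for X
  proof -
    have "vadd (vadd {i, j} c) (vadd X c) = X - {i, j}"
      using that by auto
    moreover have "card (X - {i, j}) = 1"
      using that ij(1) by (simp add: mem_STS_iff card_Diff_subset card_ge_0_finite)
    ultimately show ?thesis
      by (simp add: hdist_def)
  qed
  have "c \<subseteq> {1..m}" "{i, j} \<subseteq> {1..m}"
    using C STS_subset[OF C T(1)] ij(2) by (auto simp: perfect_code_def vecs_def)
  then have "vadd {i, j} c \<in> vecs m"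
    by (simp add: vecs_def vadd_subset)
  then have "vadd T c = vadd T' c"
    using C(1) T close[OF T(1) ij(2)] close[OF T(2) ij(3)]
    unfolding perfect_code_def mem_STS_iff by blast
  then show ?thesis
    by (metis vadd_cancel(2))
qed

definition covers_pairs :: "nat \<Rightarrow> nat set set \<Rightarrow> bool" where
  "covers_pairs m M \<longleftrightarrow> (\<forall>i \<in> {1..m}. \<forall>j \<in> {1..m}. i \<noteq> j \<longrightarrow> (\<exists>T \<in> M. i \<in> T \<and> j \<in> T))"

lemma STS_eq_if_covers_pairs:
  assumes C: "perfect_code m C" "c \<in> C" and M: "M \<subseteq> STS C c" "covers_pairs m M"
  shows "STS C c = M"
proof
  show "STS C c \<subseteq> M"
  proof
    fix T assume T: "T \<in> STS C c"
    then obtain i j k where ijk: "T = {i, j, k}" "i \<noteq> j"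
      by (metis mem_STS_iff card_3_iff)
    moreover have "i \<in> {1..m}" "j \<in> {1..m}"
      using STS_subset[OF C T] ijk by auto
    ultimately obtain T' where "T' \<in> M" "{i, j} \<subseteq> T'"
      using M(2) unfolding covers_pairs_def by blast
    moreover have "T' = T"
      using STS_pair_unique[OF C _ T] M(1) ijk calculation by blast
    ultimately show "T \<in> M"
      by simp
  qed
qed (use M in simp)

lemma covers_pairs_image:
  assumes \<sigma>: "\<sigma> permutes {1..m}" and M: "covers_pairs m M"
  shows "covers_pairs m ((\<lambda>T. \<sigma> ` T) ` M)"
  unfolding covers_pairs_def
proof (intro ballI impI)
  fix i j assume ij: "i \<in> {1..m}" "j \<in> {1..m}" "i \<noteq> j"
  then have "inv \<sigma> i \<in> {1..m}" "inv \<sigma> j \<in> {1..m}" "inv \<sigma> i \<noteq> inv \<sigma> j"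
    using permutes_in_image[OF permutes_inv[OF \<sigma>]] permutes_inverses(1)[OF \<sigma>] by metis+
  then obtain T where "T \<in> M" "inv \<sigma> i \<in> T" "inv \<sigma> j \<in> T"
    using M unfolding covers_pairs_def by blast
  then show "\<exists>T \<in> (\<lambda>T. \<sigma> ` T) ` M. i \<in> T \<and> j \<in> T"
    by (metis image_eqI permutes_inverses(1)[OF \<sigma>])
qed

lemma homogeneous_if_STS_isomorphic:
  assumes C: "perfect_code m C" "{} \<in> C"
    and iso: "\<And>y. y \<in> C \<Longrightarrow> \<exists>\<sigma>. \<sigma> permutes {1..m} \<and> STS C y = (\<lambda>T. \<sigma> ` T) ` M"
  shows "homogeneous m C"
  unfolding homogeneous_def
proof (intro conjI ballI C)
  fix y assume "y \<in> C"
  obtain \<sigma> where \<sigma>: "\<sigma> permutes {1..m}" "STS C y = (\<lambda>T. \<sigma> ` T) ` M"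
    using iso[OF \<open>y \<in> C\<close>] by blast
  obtain \<sigma>\<^sub>0 where \<sigma>\<^sub>0: "\<sigma>\<^sub>0 permutes {1..m}" "STS C {} = (\<lambda>T. \<sigma>\<^sub>0 ` T) ` M"
    using iso[OF C(2)] by blast
  let ?\<pi> = "\<sigma>\<^sub>0 \<circ> inv \<sigma>"
  have "?\<pi> permutes {1..m}"
    by (intro permutes_compose permutes_inv \<sigma>(1) \<sigma>\<^sub>0(1))
  moreover have "?\<pi> ` \<sigma> ` T = \<sigma>\<^sub>0 ` T" for T
    by (simp add: image_comp permutes_inverses(2)[OF \<sigma>(1)])
  then have "(\<lambda>T. ?\<pi> ` T) ` STS C y = STS C {}"
    unfolding \<sigma>(2) \<sigma>\<^sub>0(2) image_image by simp
  ultimately show "\<exists>\<pi>. \<pi> permutes {1..m} \<and> (\<lambda>T. \<pi> ` T) ` STS C y = STS C {}"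
    by blast
qed

section \<open>The Hamming code\<close>

lemma span2_vadd: "x \<in> span2 G \<Longrightarrow> w \<in> span2 G \<Longrightarrow> vadd x w \<in> span2 G"
  by (induction rule: span2.induct) (auto simp: vadd_assoc intro: span2.add)

lemma span2_minimal:
  assumes "{} \<in> S" "\<And>g x. g \<in> G \<Longrightarrow> x \<in> S \<Longrightarrow> vadd g x \<in> S"
  shows "span2 G \<subseteq> S"
proof
  show "x \<in> S" if "x \<in> span2 G" for x
    using that by induction (use assms in auto)
qed

fun lin_comb :: "bool list \<Rightarrow> nat set list \<Rightarrow> nat set" where
  "lin_comb (b # bs) (g # gs) = (if b then vadd g (lin_comb bs gs) else lin_comb bs gs)"
| "lin_comb _ _ = {}"

lemma lin_comb_in_span2: "set gs \<subseteq> G \<Longrightarrow> lin_comb bs gs \<in> span2 G"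
  by (induction bs gs rule: lin_comb.induct) (auto intro: span2.intros)

definition hamming_generators :: "nat set list" where
  "hamming_generators = [{1,2,3}, {1,4,5}, {1,6,7}, {2,4,6}]"

definition hamming_words :: "nat set list" where
  "hamming_words = [{}, {1,2,3}, {1,4,5}, {1,6,7}, {2,4,6}, {2,5,7}, {3,4,7}, {3,5,6},
     {1,2,4,7}, {1,2,5,6}, {1,3,4,6}, {1,3,5,7}, {2,3,4,5}, {2,3,6,7}, {4,5,6,7}, {1,2,3,4,5,6,7}]"

lemma hamH_eq: "hamH = set hamming_words"
proof
  have H: "hamH = span2 (set hamming_generators)"
    by (simp add: hamH_def hamming_generators_def)
  have closed: "\<forall>g \<in> set hamming_generators. \<forall>h \<in> set hamming_words. vadd g h \<in> set hamming_words"
    by code_simp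
  show "hamH \<subseteq> set hamming_words"
    unfolding H
  proof (rule span2_minimal)
    show "{} \<in> set hamming_words"
      by (simp add: hamming_words_def)
  qed (use closed in blast)
  have "set hamming_words = (\<lambda>bs. lin_comb bs hamming_generators) ` set (List.n_lists 4 [True, False])"
    by code_simp
  then show "set hamming_words \<subseteq> hamH"
    unfolding H using lin_comb_in_span2[of hamming_generators] by auto
qed

lemma hamH_vadd: "y \<in> hamH \<Longrightarrow> y' \<in> hamH \<Longrightarrow> vadd y y' \<in> hamH"
  unfolding hamH_def by (rule span2_vadd)

lemma hamming_words_props:
  "\<forall>y \<in> set hamming_words. y \<subseteq> {1..7} \<and> (y \<noteq> {} \<longrightarrow> 3 \<le> card y)"
  "card (set hamming_words) = 16"
  by code_simp+

lemma hamH_subset: "y \<in> hamH \<Longrightarrow> y \<subseteq> {1..7}"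
  using hamming_words_props(1) by (simp add: hamH_eq)

lemma hamH_weight: "y \<in> hamH \<Longrightarrow> y \<noteq> {} \<Longrightarrow> 3 \<le> card y"
  using hamming_words_props(1) by (simp add: hamH_eq)

lemma card_hamH: "card hamH = 16"
  using hamming_words_props(2) by (simp add: hamH_eq)

section \<open>The Vasil'ev codes\<close>

definition join :: "nat set \<Rightarrow> bool \<Rightarrow> nat set \<Rightarrow> nat set" where
  "join u p v = u \<union> (if p then {8} else {}) \<union> (\<lambda>i. i + 8) ` v"

lemma mem_join_iff: "i \<in> join u p v \<longleftrightarrow> i \<in> u \<or> (p \<and> i = 8) \<or> (8 \<le> i \<and> i - 8 \<in> v)"
  by (force simp: join_def)

lemma join_eq_empty_iff: "join u p v = {} \<longleftrightarrow> u = {} \<and> \<not> p \<and> v = {}"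
  by (auto simp: join_def)

lemma vadd_join:
  assumes "u \<subseteq> {1..7}" "u' \<subseteq> {1..7}" "v \<subseteq> {1..7}" "v' \<subseteq> {1..7}"
  shows "vadd (join u p v) (join u' p' v') = join (vadd u u') (p \<noteq> p') (vadd v v')"
proof (rule set_eqI)
  fix i
  have low: "k \<notin> u \<and> k \<notin> u'" if "\<not> k \<le> 7" for k
    using assms that by auto
  have high: "k - 8 \<notin> v \<and> k - 8 \<notin> v'" if "k \<le> 8" for k
    using assms that by auto
  have high0: "0 \<notin> v \<and> 0 \<notin> v'"
    using assms by auto
  show "i \<in> vadd (join u p v) (join u' p' v') \<longleftrightarrow> i \<in> join (vadd u u') (p \<noteq> p') (vadd v v')"
    unfolding vadd_iff mem_join_iff by (cases "i \<le> 7"; cases "i = 8") (simp_all add: low high high0)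
qed

lemma join_eq_iff:
  assumes "u \<subseteq> {1..7}" "u' \<subseteq> {1..7}" "v \<subseteq> {1..7}" "v' \<subseteq> {1..7}"
  shows "join u p v = join u' p' v' \<longleftrightarrow> u = u' \<and> p = p' \<and> v = v'"
proof
  assume "join u p v = join u' p' v'"
  then have "join (vadd u u') (p \<noteq> p') (vadd v v') = {}"
    using vadd_join[OF assms, of p p'] by simp
  then show "u = u' \<and> p = p' \<and> v = v'"
    by (simp add: join_eq_empty_iff vadd_eq_empty_iff)
qed simp

lemma card_join:
  assumes "u \<subseteq> {1..7}" "v \<subseteq> {1..7}"
  shows "card (join u p v) = card u + of_bool p + card v"
proof -
  have "finite u" "finite v"
    using assms by (auto intro: finite_subset)
  moreover have "u \<inter> (if p then {8} else {}) = {}"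
    "(u \<union> (if p then {8} else {})) \<inter> (\<lambda>i. i + 8) ` v = {}"
    using assms by auto
  ultimately show ?thesis
    by (simp add: join_def card_Un_disjoint card_image)
qed

lemma join_subset: "u \<subseteq> {1..7} \<Longrightarrow> v \<subseteq> {1..7} \<Longrightarrow> join u p v \<subseteq> {1..15}"
  by (auto simp: join_def)

definition vword :: "(nat set \<Rightarrow> nat) \<Rightarrow> nat set \<Rightarrow> nat set \<Rightarrow> nat set" where
  "vword lam x y = join (vadd x y) (odd (card x + lam y)) x"

lemma vword_subset: "x \<subseteq> {1..7} \<Longrightarrow> y \<subseteq> {1..7} \<Longrightarrow> vword lam x y \<subseteq> {1..15}"
  unfolding vword_def by (intro join_subset vadd_subset)

lemma vasiliev_eq_image: "vasiliev lam = (\<lambda>(x, y). vword lam x y) ` (vecs 7 \<times> hamH)"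
proof -
  have "vasiliev lam = {vword lam x y | x y. x \<in> vecs 7 \<and> y \<in> hamH}"
    by (simp add: vasiliev_def vword_def join_def)
  then show ?thesis
    by auto
qed

lemma vword_in_vasiliev: "x \<in> vecs 7 \<Longrightarrow> y \<in> hamH \<Longrightarrow> vword lam x y \<in> vasiliev lam"
  by (auto simp: vasiliev_eq_image)

lemma hdist_vword:
  assumes "x \<subseteq> {1..7}" "y \<subseteq> {1..7}" "x' \<subseteq> {1..7}" "y' \<subseteq> {1..7}"
  shows "hdist (vword lam x y) (vword lam x' y') =
    card (vadd (vadd x y) (vadd x' y')) + of_bool (odd (card x + lam y) \<noteq> odd (card x' + lam y')) +
    card (vadd x x')"
  using assms by (simp add: hdist_def vword_def vadd_join card_join vadd_subset)

lemma vword_inj: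
  assumes "x \<subseteq> {1..7}" "y \<subseteq> {1..7}" "x' \<subseteq> {1..7}" "y' \<subseteq> {1..7}"
    and "vword lam x y = vword lam x' y'"
  shows "x = x' \<and> y = y'"
  using assms by (auto simp: vword_def join_eq_iff vadd_subset)

text \<open>Distinct \<open>H\<close>-components already differ in at least 3 coordinates, which survive in
  the first and last blocks by the triangle inequality; equal ones give \<open>2 d(x, x')\<close> plus the
  parity bit, which is set when \<open>d(x, x') = 1\<close>.\<close>

lemma vasiliev_min_dist:
  assumes x: "x \<subseteq> {1..7}" "x' \<subseteq> {1..7}" and y: "y \<in> hamH" "y' \<in> hamH"
    and ne: "vword lam x y \<noteq> vword lam x' y'"
  shows "3 \<le> hdist (vword lam x y) (vword lam x' y')"
proof (cases "y = y'")
  case False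
  have y7: "y \<subseteq> {1..7}" "y' \<subseteq> {1..7}"
    using y hamH_subset by auto
  have "3 \<le> card (vadd y y')"
    using False y by (simp add: hamH_weight hamH_vadd vadd_eq_empty_iff)
  also have "vadd y y' = vadd (vadd (vadd x y) (vadd x' y')) (vadd x x')"
    by auto
  also have "card \<dots> \<le> card (vadd (vadd x y) (vadd x' y')) + card (vadd x x')"
    using x y7 by (intro card_vadd_le finite_vadd) (auto intro: finite_subset)
  finally show ?thesis
    using x y7 by (simp add: hdist_vword)
next
  case True
  have fin: "finite x" "finite x'"
    using x by (auto intro: finite_subset)
  have "x \<noteq> x'"
    using ne True by auto
  then have "card (vadd x x') \<noteq> 0"
    using fin by (simp add: vadd_eq_empty_iff)
  moreover have "odd (card x + lam y) \<noteq> odd (card x' + lam y)" if "card (vadd x x') = 1"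
    using card_vadd_parity[OF fin] that by presburger
  moreover have "vadd (vadd x y) (vadd x' y) = vadd x x'"
    by auto
  ultimately show ?thesis
    using x hamH_subset[OF y(1)] True by (cases "card (vadd x x') = 1") (simp_all add: hdist_vword)
qed

lemma card_vasiliev: "card (vasiliev lam) = 2 ^ 11"
proof -
  have "inj_on (\<lambda>(x, y). vword lam x y) (vecs 7 \<times> hamH)"
  proof (rule inj_onI, clarsimp)
    fix x y x' y' assume "x \<in> vecs 7" "y \<in> hamH" "x' \<in> vecs 7" "y' \<in> hamH"
      and "vword lam x y = vword lam x' y'"
    then show "x = x' \<and> y = y'"
      using vword_inj[of x y x' y' lam] hamH_subset[of y] hamH_subset[of y'] by (simp add: vecs_def)
  qed
  then have "card (vasiliev lam) = card (vecs 7 \<times> hamH)"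
    by (simp add: vasiliev_eq_image card_image)
  then show ?thesis
    by (simp add: card_cartesian_product card_hamH vecs_def card_Pow)
qed

lemma perfect_vasiliev: "perfect_code 15 (vasiliev lam)"
proof (rule perfect_code_if_sphere_packing_tight)
  show "vasiliev lam \<subseteq> vecs 15"
    unfolding vasiliev_eq_image vecs_def using vword_subset hamH_subset by blast
  show "3 \<le> hdist a b" if ab: "a \<in> vasiliev lam" "b \<in> vasiliev lam" "a \<noteq> b" for a b
  proof -
    obtain x y x' y' where "a = vword lam x y" "b = vword lam x' y'"
      and "x \<subseteq> {1..7}" "x' \<subseteq> {1..7}" "y \<in> hamH" "y' \<in> hamH"
      using ab(1,2) by (auto simp: vasiliev_eq_image vecs_def)
    then show ?thesis
      using ab(3) vasiliev_min_dist by simp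
  qed
qed (simp add: card_vasiliev)

text \<open>Because \<open>\<lambda>(0) = 0\<close>, the codewords \<open>(u, |u|, u)\<close> act on the code by translation.\<close>

lemma vadd_vword_translate:
  assumes "lam {} = 0" "x \<subseteq> {1..7}" "u \<subseteq> {1..7}" "y \<subseteq> {1..7}"
  shows "vadd (vword lam x y) (vword lam u {}) = vword lam (vadd x u) y"
proof -
  have "card x + card u = card (vadd x u) + 2 * card (x \<inter> u)"
    using assms(2,3) by (intro card_vadd_parity) (auto intro: finite_subset)
  then have "odd (card (vadd x u) + lam y) \<longleftrightarrow> odd (card x + lam y) \<noteq> odd (card u)"
    by presburger
  moreover have "vadd (vadd x y) u = vadd (vadd x u) y"
    by auto
  ultimately show ?thesis
    using assms by (simp add: vword_def vadd_join vadd_subset)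
qed

lemma STS_vasiliev_vword:
  assumes "lam {} = 0" "x \<subseteq> {1..7}" "y \<in> hamH"
  shows "STS (vasiliev lam) (vword lam x y) = STS (vasiliev lam) (vword lam {} y)"
proof -
  have "vword lam x y = vadd (vword lam {} y) (vword lam x {})"
    using vadd_vword_translate[of lam "{}" x y] assms hamH_subset by simp
  moreover have "vadd w (vword lam x {}) \<in> vasiliev lam" if w: "w \<in> vasiliev lam" for w
  proof -
    obtain x' y' where "w = vword lam x' y'" "x' \<subseteq> {1..7}" "y' \<in> hamH"
      using w by (auto simp: vasiliev_eq_image vecs_def)
    moreover have "vadd x' x \<subseteq> {1..7}"
      using calculation(2) assms(2) by (rule vadd_subset)
    ultimately show ?thesis
      using vadd_vword_translate[of lam x' x y'] vword_in_vasiliev[of "vadd x' x" y' lam] assms hamH_subset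
      by (simp add: vecs_def)
  qed
  ultimately show ?thesis
    using STS_translate by metis
qed

section \<open>Certificates of homogeneity\<close>

definition low :: "nat set \<Rightarrow> nat set" where
  "low w = Set.filter (\<lambda>i. i \<in> w) {1..7}"

definition high :: "nat set \<Rightarrow> nat set" where
  "high w = Set.filter (\<lambda>i. i + 8 \<in> w) {1..7}"

lemma join_low_high:
  assumes "w \<subseteq> {1..15}"
  shows "join (low w) (8 \<in> w) (high w) = w"
proof (rule set_eqI)
  fix i
  have "i \<in> w \<Longrightarrow> 1 \<le> i \<and> i \<le> 15"
    using assms by auto
  then show "i \<in> join (low w) (8 \<in> w) (high w) \<longleftrightarrow> i \<in> w"
    by (cases "i = 8") (auto simp: mem_join_iff low_def high_def)
qed

text \<open>An executable membership test, decoding \<open>w\<close> as \<open>(x + y, |x| + \<lambda>(y), x)\<close>.\<close>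

definition vasiliev_test :: "(nat set \<Rightarrow> nat) \<Rightarrow> nat set \<Rightarrow> bool" where
  "vasiliev_test lam w \<longleftrightarrow> w \<subseteq> {1..15} \<and> vadd (low w) (high w) \<in> set hamming_words \<and>
     (8 \<in> w \<longleftrightarrow> odd (card (high w) + lam (vadd (low w) (high w))))"

lemma vasiliev_test_sound:
  assumes "vasiliev_test lam w"
  shows "w \<in> vasiliev lam"
proof -
  let ?x = "high w" and ?y = "vadd (low w) (high w)"
  have "vadd ?x ?y = low w"
    by auto
  moreover have "odd (card ?x + lam ?y) \<longleftrightarrow> 8 \<in> w"
    using assms by (simp add: vasiliev_test_def)
  ultimately have "vword lam ?x ?y = w"
    using assms join_low_high by (simp add: vasiliev_test_def vword_def)
  moreover have "?x \<in> vecs 7" "?y \<in> hamH"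
    using assms by (auto simp: vasiliev_test_def high_def vecs_def hamH_eq)
  ultimately show ?thesis
    using vword_in_vasiliev by metis
qed

definition perm_of_list :: "nat list \<Rightarrow> nat \<Rightarrow> nat" where
  "perm_of_list p i = (if 1 \<le> i \<and> i \<le> length p then p ! (i - 1) else i)"

lemma perm_of_list_permutes:
  assumes p: "distinct p" "set p = {1..n}"
  shows "perm_of_list p permutes {1..n}"
proof (rule bij_imp_permutes)
  have n: "length p = n"
    using distinct_card[OF p(1)] p(2) by simp
  have inj: "inj_on (perm_of_list p) {1..n}"
    using p(1) n by (auto simp: inj_on_def perm_of_list_def nth_eq_iff_index_eq)
  have "perm_of_list p i \<in> {1..n}" if "i \<in> {1..n}" for i
  proof -
    have "p ! (i - 1) \<in> set p"
      using that n by (intro nth_mem) auto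
    then show ?thesis
      using that n p(2) by (simp add: perm_of_list_def)
  qed
  then have "perm_of_list p ` {1..n} = {1..n}"
    using inj by (intro endo_inj_surj) auto
  with inj show "bij_betw (perm_of_list p) {1..n} {1..n}"
    by (simp add: bij_betw_def)
  show "perm_of_list p i = i" if "i \<notin> {1..n}" for i
    using that n by (auto simp: perm_of_list_def)
qed

definition STS_certificate ::
    "(nat set \<Rightarrow> nat) \<Rightarrow> nat set list \<Rightarrow> (nat set \<times> nat list) list \<Rightarrow> bool" where
  "STS_certificate lam L P \<longleftrightarrow> set (map fst P) = set hamming_words \<and>
     (\<forall>(y, p) \<in> set P. distinct p \<and> set p = {1..15} \<and>
        (\<forall>T \<in> set L. card (perm_of_list p ` T) = 3 \<and>
           vasiliev_test lam (vadd (perm_of_list p ` T) (vword lam {} y))))"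

lemma STS_vasiliev_isomorphic:
  assumes cert: "STS_certificate lam L P" and L: "covers_pairs 15 (set L)" and y: "y \<in> hamH"
  shows "\<exists>\<sigma>. \<sigma> permutes {1..15} \<and> STS (vasiliev lam) (vword lam {} y) = (\<lambda>T. \<sigma> ` T) ` set L"
proof -
  obtain p where "(y, p) \<in> set P"
    using cert y by (force simp: STS_certificate_def hamH_eq)
  then have p: "distinct p" "set p = {1..15}"
    and triples: "\<And>T. T \<in> set L \<Longrightarrow> card (perm_of_list p ` T) = 3 \<and>
        vasiliev_test lam (vadd (perm_of_list p ` T) (vword lam {} y))"
    using cert unfolding STS_certificate_def by fast+
  let ?\<sigma> = "perm_of_list p"
  have \<sigma>: "?\<sigma> permutes {1..15}"
    using perm_of_list_permutes[OF p] .
  have "vword lam {} y \<in> vasiliev lam"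
    using y by (simp add: vword_in_vasiliev vecs_def)
  moreover have "(\<lambda>T. ?\<sigma> ` T) ` set L \<subseteq> STS (vasiliev lam) (vword lam {} y)"
    using triples vasiliev_test_sound by (auto simp: mem_STS_iff)
  ultimately have "STS (vasiliev lam) (vword lam {} y) = (\<lambda>T. ?\<sigma> ` T) ` set L"
    using covers_pairs_image[OF \<sigma> L] by (rule STS_eq_if_covers_pairs[OF perfect_vasiliev])
  then show ?thesis
    using \<sigma> by blast
qed

theorem homogeneous_vasiliev:
  assumes lam0: "lam {} = 0" and cert: "STS_certificate lam L P" and L: "covers_pairs 15 (set L)"
  shows "homogeneous 15 (vasiliev lam)"
proof (rule homogeneous_if_STS_isomorphic[OF perfect_vasiliev])
  have "vword lam {} {} = {}"
    using lam0 by (simp add: vword_def join_def)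
  then show "{} \<in> vasiliev lam"
    using vword_in_vasiliev[of "{}" "{}" lam] by (simp add: vecs_def hamH_def span2.zero)
  fix c assume "c \<in> vasiliev lam"
  then obtain x y where "c = vword lam x y" "x \<subseteq> {1..7}" "y \<in> hamH"
    by (auto simp: vasiliev_eq_image vecs_def)
  then have "STS (vasiliev lam) c = STS (vasiliev lam) (vword lam {} y)"
    using STS_vasiliev_vword[of lam x y] lam0 by simp
  then show "\<exists>\<sigma>. \<sigma> permutes {1..15} \<and> STS (vasiliev lam) c = (\<lambda>T. \<sigma> ` T) ` set L"
    using STS_vasiliev_isomorphic[OF cert L \<open>y \<in> hamH\<close>] by simp
qed

text \<open>\<open>lambdaN_triples\<close> is \<open>STS(V, 0)\<close>, and \<open>lambdaN_perms\<close> pairs every \<open>y \<in> H\<close> with a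
  permutation, written as its list of values on \<open>1, \<dots>, 15\<close>, that maps it into
  \<open>STS(V, (y, \<lambda>(y), 0))\<close>.\<close>

definition lambda1_triples :: "nat set list" where
  "lambda1_triples = [
    {1, 2, 11}, {1, 3, 10}, {1, 4, 13}, {1, 5, 12}, {1, 6, 7}, {1, 8, 9}, {1, 14, 15},
    {2, 3, 9}, {2, 4, 14}, {2, 5, 15}, {2, 6, 12}, {2, 7, 13}, {2, 8, 10}, {3, 4, 15},
    {3, 5, 14}, {3, 6, 13}, {3, 7, 12}, {3, 8, 11}, {4, 5, 9}, {4, 6, 10}, {4, 7, 11},
    {4, 8, 12}, {5, 6, 11}, {5, 7, 10}, {5, 8, 13}, {6, 8, 14}, {6, 9, 15}, {7, 8, 15},
    {7, 9, 14}, {9, 10, 11}, {9, 12, 13}, {10, 12, 14}, {10, 13, 15}, {11, 12, 15}, {11, 13, 14}]"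

definition lambda1_perms :: "(nat set \<times> nat list) list" where
  "lambda1_perms = [
    ({}, [1, 2, 3, 4, 5, 6, 7, 8, 9, 10, 11, 12, 13, 14, 15]),
    ({1, 2, 3}, [2, 1, 3, 5, 7, 12, 14, 8, 10, 9, 11, 13, 15, 4, 6]),
    ({1, 4, 5}, [2, 1, 11, 5, 15, 4, 6, 8, 10, 9, 3, 13, 7, 12, 14]),
    ({1, 6, 7}, [2, 1, 3, 5, 7, 4, 14, 8, 10, 9, 11, 13, 15, 12, 6]),
    ({2, 4, 6}, [2, 1, 11, 5, 15, 12, 6, 8, 10, 9, 3, 13, 7, 4, 14]),
    ({2, 5, 7}, [2, 1, 3, 5, 7, 12, 14, 8, 10, 9, 11, 13, 15, 4, 6]),
    ({3, 4, 7}, [2, 1, 11, 5, 15, 4, 6, 8, 10, 9, 3, 13, 7, 12, 14]),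
    ({3, 5, 6}, [2, 1, 11, 5, 15, 12, 14, 8, 10, 9, 3, 13, 7, 4, 6]),
    ({1, 2, 4, 7}, [1, 2, 11, 4, 13, 6, 7, 8, 9, 10, 3, 12, 5, 14, 15]),
    ({1, 2, 5, 6}, [1, 2, 11, 4, 13, 14, 15, 8, 9, 10, 3, 12, 5, 6, 7]),
    ({1, 3, 4, 6}, [1, 2, 11, 4, 13, 14, 15, 8, 9, 10, 3, 12, 5, 6, 7]),
    ({1, 3, 5, 7}, [1, 2, 3, 4, 5, 14, 7, 8, 9, 10, 11, 12, 13, 6, 15]),
    ({2, 3, 4, 5}, [1, 2, 11, 4, 13, 14, 7, 8, 9, 10, 3, 12, 5, 6, 15]),
    ({2, 3, 6, 7}, [1, 2, 3, 4, 5, 14, 15, 8, 9, 10, 11, 12, 13, 6, 7]),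
    ({4, 5, 6, 7}, [1, 2, 3, 4, 5, 14, 15, 8, 9, 10, 11, 12, 13, 6, 7]),
    ({1, 2, 3, 4, 5, 6, 7}, [2, 1, 3, 5, 7, 4, 6, 8, 10, 9, 11, 13, 15, 12, 14])]"

definition lambda2_triples :: "nat set list" where
  "lambda2_triples = [
    {1, 2, 11}, {1, 3, 10}, {1, 4, 13}, {1, 5, 12}, {1, 6, 7}, {1, 8, 9}, {1, 14, 15},
    {2, 3, 9}, {2, 4, 6}, {2, 5, 15}, {2, 7, 13}, {2, 8, 10}, {2, 12, 14}, {3, 4, 15},
    {3, 5, 14}, {3, 6, 13}, {3, 7, 12}, {3, 8, 11}, {4, 5, 9}, {4, 7, 11}, {4, 8, 12},
    {4, 10, 14}, {5, 6, 11}, {5, 7, 10}, {5, 8, 13}, {6, 8, 14}, {6, 9, 15}, {6, 10, 12},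
    {7, 8, 15}, {7, 9, 14}, {9, 10, 11}, {9, 12, 13}, {10, 13, 15}, {11, 12, 15}, {11, 13, 14}]"

definition lambda2_perms :: "(nat set \<times> nat list) list" where
  "lambda2_perms = [
    ({}, [1, 2, 3, 4, 5, 6, 7, 8, 9, 10, 11, 12, 13, 14, 15]),
    ({1, 2, 3}, [4, 5, 9, 6, 10, 3, 7, 8, 12, 13, 1, 14, 2, 11, 15]),
    ({1, 4, 5}, [4, 5, 1, 6, 10, 3, 7, 8, 12, 13, 9, 14, 2, 11, 15]),
    ({1, 6, 7}, [4, 5, 9, 6, 2, 11, 7, 8, 12, 13, 1, 14, 10, 3, 15]),
    ({2, 4, 6}, [4, 5, 1, 6, 10, 11, 7, 8, 12, 13, 9, 14, 2, 3, 15]),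
    ({2, 5, 7}, [4, 5, 9, 6, 2, 3, 7, 8, 12, 13, 1, 14, 10, 11, 15]),
    ({3, 4, 7}, [4, 5, 9, 6, 10, 11, 7, 8, 12, 13, 1, 14, 2, 3, 15]),
    ({3, 5, 6}, [4, 5, 9, 6, 10, 11, 7, 8, 12, 13, 1, 14, 2, 3, 15]),
    ({1, 2, 4, 7}, [1, 2, 11, 4, 13, 14, 7, 8, 9, 10, 3, 12, 5, 6, 15]),
    ({1, 2, 5, 6}, [1, 2, 11, 4, 5, 6, 7, 8, 9, 10, 3, 12, 13, 14, 15]),
    ({1, 3, 4, 6}, [1, 2, 3, 4, 13, 6, 7, 8, 9, 10, 11, 12, 5, 14, 15]),
    ({1, 3, 5, 7}, [1, 2, 11, 4, 13, 6, 7, 8, 9, 10, 3, 12, 5, 14, 15]),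
    ({2, 3, 4, 5}, [1, 2, 11, 4, 13, 6, 7, 8, 9, 10, 3, 12, 5, 14, 15]),
    ({2, 3, 6, 7}, [1, 2, 3, 4, 13, 6, 7, 8, 9, 10, 11, 12, 5, 14, 15]),
    ({4, 5, 6, 7}, [1, 2, 3, 4, 13, 14, 7, 8, 9, 10, 11, 12, 5, 6, 15]),
    ({1, 2, 3, 4, 5, 6, 7}, [4, 5, 9, 6, 10, 3, 7, 8, 12, 13, 1, 14, 2, 11, 15])]"

theorem lemma3:
  shows "homogeneous 15 (vasiliev lambda1) \<and> homogeneous 15 (vasiliev lambda2)"
proof
  have "STS_certificate lambda1 lambda1_triples lambda1_perms"
    "covers_pairs 15 (set lambda1_triples)"
    by code_simp+
  then show "homogeneous 15 (vasiliev lambda1)"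
    by (intro homogeneous_vasiliev) (simp_all add: lambda1_def)
  have "STS_certificate lambda2 lambda2_triples lambda2_perms"
    "covers_pairs 15 (set lambda2_triples)"
    by code_simp+
  then show "homogeneous 15 (vasiliev lambda2)"
    by (intro homogeneous_vasiliev) (simp_all add: lambda2_def)
qed

end
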